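(* Let $\mathcal D\subset\mathbb R^d$ be a nonempty compact convex set with Euclidean diameter $M$, and let $f$ be convex and differentiable on an open set containing $\mathcal D$ with $\nabla f$ being $L$-Lipschitz on $\mathcal D$ (Euclidean norm). For $x\in\mathcal D$ let $h(x):=f(x)-\min_{\mathcal D}f$ and $g^{FW}(x):=\max_{s\in\mathcal D}\langle-\nabla f(x),s-x\rangle$. Then for every $x\in\mathcal D$: if $h(x)>LM^2/2$ then $g^{FW}(x)\le h(x)+LM^2/2$, and otherwise $g^{FW}(x)\le M\sqrt{2h(x)L}$. *)

theory Defs
  imports "HOL-Analysis.Analysis"
begin

end

theory Submission imports Defs begin

text \<open>For every \<open>s \<in> D\<close> and \<open>\<gamma> \<in> [0,1]\<close> the point
\<open>x + \<gamma>(s - x)\<close> lies in \<open>D\<close>, so the descent lemma for an \<open>L\<close>-smooth function gives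
\<open>min f \<le> f x - \<gamma> \<langle>-\<nabla>f x, s - x\<rangle> + L \<gamma>\<^sup>2 M\<^sup>2 / 2\<close>. Hence every Frank-Wolfe gap term \<open>g\<close>
satisfies \<open>\<gamma> g \<le> h + L M\<^sup>2 \<gamma>\<^sup>2 / 2\<close> on \<open>[0,1]\<close>; taking \<open>\<gamma> = 1\<close>, resp. the minimiser
\<open>\<gamma> = \<surd>(2h / (L M\<^sup>2))\<close> of the right-hand side divided by \<open>\<gamma>\<close>, gives the two bounds.\<close>

lemma has_real_derivative_along_line:
  fixes f :: "'a::real_inner \<Rightarrow> real"
  assumes "(f has_derivative (\<lambda>v. grad \<bullet> v)) (at (x + t *\<^sub>R d))"
  shows "((\<lambda>s. f (x + s *\<^sub>R d)) has_real_derivative (grad \<bullet> d)) (at t)"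
proof -
  have line: "((\<lambda>s. x + s *\<^sub>R d) has_derivative (\<lambda>h. h *\<^sub>R d)) (at t)"
    by (auto intro!: derivative_eq_intros)
  have "(\<lambda>h. grad \<bullet> (h *\<^sub>R d)) = (*) (grad \<bullet> d)"
    by (rule ext) (simp add: mult.commute)
  with has_derivative_compose[OF line assms] show ?thesis
    by (simp add: o_def has_field_derivative_def)
qed

lemma lipschitz_gradient_descent_bound:
  fixes f :: "'a::real_inner \<Rightarrow> real" and grad :: "'a \<Rightarrow> 'a"
  assumes "convex D"
    and der: "\<And>y. y \<in> D \<Longrightarrow> (f has_derivative (\<lambda>v. grad y \<bullet> v)) (at y)"
    and lip: "L-lipschitz_on D grad"
    and x: "x \<in> D" and y: "y \<in> D"
  shows "f y \<le> f x + grad x \<bullet> (y - x) + L / 2 * (norm (y - x))\<^sup>2"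
proof -
  define d where "d = y - x"
  define \<psi> where "\<psi> t = f (x + t *\<^sub>R d) - t * (grad x \<bullet> d) - L / 2 * t\<^sup>2 * (norm d)\<^sup>2" for t
  have "\<psi> 1 \<le> \<psi> 0"
  proof (rule DERIV_nonpos_imp_nonincreasing[of 0 1])
    fix t :: real assume t: "0 \<le> t" "t \<le> 1"
    define z where "z = x + t *\<^sub>R d"
    have "z = (1 - t) *\<^sub>R x + t *\<^sub>R y" by (simp add: z_def d_def algebra_simps)
    hence zD: "z \<in> D" using convexD_alt[OF assms(1) x y t] by simp
    have "((\<lambda>s. f (x + s *\<^sub>R d)) has_real_derivative (grad z \<bullet> d)) (at t)"
      using has_real_derivative_along_line der[OF zD] by (simp add: z_def)
    hence "(\<psi> has_real_derivative (grad z \<bullet> d - grad x \<bullet> d - L / 2 * (2 * t) * (norm d)\<^sup>2)) (at t)"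
      unfolding \<psi>_def by (auto intro!: derivative_eq_intros)
    moreover have "grad z \<bullet> d - grad x \<bullet> d \<le> L / 2 * (2 * t) * (norm d)\<^sup>2"
    proof -
      have "grad z \<bullet> d - grad x \<bullet> d \<le> norm (grad z - grad x) * norm d"
        by (metis Cauchy_Schwarz_ineq2 abs_le_D1 inner_diff_left)
      also have "\<dots> \<le> L * norm (t *\<^sub>R d) * norm d"
        using lipschitz_onD[OF lip zD x] by (simp add: z_def dist_norm mult_right_mono)
      also have "\<dots> = L / 2 * (2 * t) * (norm d)\<^sup>2"
        using t by (simp add: power2_eq_square)
      finally show ?thesis .
    qed
    ultimately show "\<exists>y. DERIV \<psi> t :> y \<and> y \<le> 0" by force
  qed simp
  thus ?thesis by (simp add: \<psi>_def d_def)
qed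

lemma nonpos_if_linear_le_quadratic:
  fixes g K :: real
  assumes "\<And>\<gamma>. 0 < \<gamma> \<Longrightarrow> \<gamma> \<le> 1 \<Longrightarrow> \<gamma> * g \<le> K * \<gamma>\<^sup>2 / 2"
  shows "g \<le> 0"
proof (rule ccontr)
  assume "\<not> g \<le> 0"
  hence g: "g > 0" by simp
  with assms[of 1] have K: "K > 0" by simp
  define \<gamma> where "\<gamma> = min 1 (g / K)"
  have \<gamma>: "0 < \<gamma>" "\<gamma> \<le> 1" using g K by (auto simp: \<gamma>_def)
  have "\<gamma> * g \<le> \<gamma> * (\<gamma> * K / 2)"
    using assms[OF \<gamma>] by (simp add: power2_eq_square algebra_simps)
  hence "g \<le> \<gamma> * K / 2" using \<gamma> by simp
  also have "\<dots> \<le> g / 2" using K by (simp add: \<gamma>_def min_def divide_simps)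
  finally show False using g by simp
qed

lemma le_sqrt_if_linear_le_quadratic:
  fixes g h K :: real
  assumes h: "0 \<le> h" "h \<le> K / 2"
    and bound: "\<And>\<gamma>. 0 \<le> \<gamma> \<Longrightarrow> \<gamma> \<le> 1 \<Longrightarrow> \<gamma> * g \<le> h + K * \<gamma>\<^sup>2 / 2"
  shows "g \<le> sqrt (2 * h * K)"
proof (cases "h = 0")
  case True
  then show ?thesis using nonpos_if_linear_le_quadratic[of g K] bound by simp
next
  case False
  with h have hK: "0 < h" "0 < K" by auto
  define \<gamma> where "\<gamma> = sqrt (2 * h / K)"
  have \<gamma>: "0 < \<gamma>" "\<gamma> \<le> 1" "\<gamma>\<^sup>2 = 2 * h / K" using h hK by (auto simp: \<gamma>_def)
  have "\<gamma> * g \<le> h + K * \<gamma>\<^sup>2 / 2" using bound \<gamma>(1,2) by simp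
  also have "\<dots> = 2 * h" using \<gamma>(3) hK by simp
  also have "\<dots> = \<gamma> * sqrt (2 * h * K)"
  proof -
    have "\<gamma> * sqrt (2 * h * K) = sqrt (2 * h / K * (2 * h * K))"
      by (simp only: \<gamma>_def real_sqrt_mult)
    also have "2 * h / K * (2 * h * K) = (2 * h)\<^sup>2"
      using hK by (simp add: power2_eq_square)
    finally have "\<gamma> * sqrt (2 * h * K) = \<bar>2 * h\<bar>" by (simp only: real_sqrt_abs)
    thus ?thesis using hK by simp
  qed
  finally show ?thesis using \<gamma> by simp
qed

lemma frank_wolfe_gap_term_bound:
  fixes f :: "'a::real_inner \<Rightarrow> real" and grad :: "'a \<Rightarrow> 'a"
  assumes "convex D" "bounded D"
    and "\<And>y. y \<in> D \<Longrightarrow> (f has_derivative (\<lambda>v. grad y \<bullet> v)) (at y)"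
    and lip: "L-lipschitz_on D grad"
    and lower: "\<And>y. y \<in> D \<Longrightarrow> m \<le> f y"
    and x: "x \<in> D" and s: "s \<in> D"
    and \<gamma>: "0 \<le> \<gamma>" "\<gamma> \<le> 1"
  shows "\<gamma> * ((- grad x) \<bullet> (s - x)) \<le> f x - m + L * (diameter D)\<^sup>2 * \<gamma>\<^sup>2 / 2"
proof -
  define y where "y = x + \<gamma> *\<^sub>R (s - x)"
  have "y = (1 - \<gamma>) *\<^sub>R x + \<gamma> *\<^sub>R s" by (simp add: y_def algebra_simps)
  hence yD: "y \<in> D" using convexD_alt[OF assms(1) x s \<gamma>] by simp
  have "norm (s - x) \<le> diameter D"
    using diameter_bounded_bound[OF assms(2) s x] by (simp add: dist_norm)
  hence "L / 2 * (\<gamma>\<^sup>2 * (norm (s - x))\<^sup>2) \<le> L / 2 * (\<gamma>\<^sup>2 * (diameter D)\<^sup>2)"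
    using lipschitz_on_nonneg[OF lip] by (intro mult_left_mono power_mono) auto
  moreover have "m \<le> f x + grad x \<bullet> (y - x) + L / 2 * (norm (y - x))\<^sup>2"
    using lower[OF yD] lipschitz_gradient_descent_bound[OF assms(1,3) lip x yD] by linarith
  moreover have "norm (y - x) = \<gamma> * norm (s - x)" "grad x \<bullet> (y - x) = \<gamma> * (grad x \<bullet> (s - x))"
    using \<gamma> by (simp_all add: y_def)
  ultimately show ?thesis
    by (simp add: power_mult_distrib algebra_simps)
qed

theorem theorem2:
  fixes D U :: "'a::euclidean_space set" and f :: "'a \<Rightarrow> real" and grad :: "'a \<Rightarrow> 'a"
    and L M :: real and x :: 'a
  assumes "D \<noteq> {}" and "compact D" and "convex D"
    and "M = diameter D"
    and "open U" and "D \<subseteq> U"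
    and "convex_on U f"
    and "\<And>y. y \<in> U \<Longrightarrow> (f has_derivative (\<lambda>v. grad y \<bullet> v)) (at y)"
    and "L-lipschitz_on D grad"
    and "x \<in> D"
  shows "let h = f x - Inf (f ` D);
             gFW = Sup ((\<lambda>s. (- grad x) \<bullet> (s - x)) ` D)
         in (h > L * M\<^sup>2 / 2 \<longrightarrow> gFW \<le> h + L * M\<^sup>2 / 2) \<and>
            (\<not> h > L * M\<^sup>2 / 2 \<longrightarrow> gFW \<le> M * sqrt (2 * h * L))"
proof -
  define h where "h = f x - Inf (f ` D)"
  have der: "\<And>y. y \<in> D \<Longrightarrow> (f has_derivative (\<lambda>v. grad y \<bullet> v)) (at y)"
    using assms(6,8) by blast
  have "continuous_on D f"
    using der by (intro continuous_at_imp_continuous_on) (auto intro: has_derivative_continuous)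
  hence Inf_le: "Inf (f ` D) \<le> f y" if "y \<in> D" for y
    using assms(2) that by (intro cInf_lower bounded_imp_bdd_below compact_imp_bounded
        compact_continuous_image) auto
  have bound: "\<gamma> * ((- grad x) \<bullet> (s - x)) \<le> h + L * M\<^sup>2 * \<gamma>\<^sup>2 / 2"
    if "s \<in> D" "0 \<le> \<gamma>" "\<gamma> \<le> 1" for s \<gamma>
    using frank_wolfe_gap_term_bound[OF assms(3) compact_imp_bounded[OF assms(2)] der assms(9)
        Inf_le assms(10) that] by (simp add: h_def assms(4))
  have "h \<ge> 0" using Inf_le[OF assms(10)] by (simp add: h_def)
  moreover have "M \<ge> 0" "L \<ge> 0"
    using assms(2,4) lipschitz_on_nonneg[OF assms(9)] by (auto intro: diameter_ge_0 compact_imp_bounded)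
  ultimately have "(- grad x) \<bullet> (s - x) \<le>
      (if h > L * M\<^sup>2 / 2 then h + L * M\<^sup>2 / 2 else M * sqrt (2 * h * L))" if "s \<in> D" for s
    using bound[of s 1] that le_sqrt_if_linear_le_quadratic[of h "L * M\<^sup>2"] bound[OF that]
    by (auto simp: real_sqrt_mult mult_ac)
  hence "Sup ((\<lambda>s. (- grad x) \<bullet> (s - x)) ` D) \<le>
      (if h > L * M\<^sup>2 / 2 then h + L * M\<^sup>2 / 2 else M * sqrt (2 * h * L))"
    using assms(1) by (intro cSup_least) auto
  thus ?thesis unfolding Let_def h_def[symmetric] by auto
qed

end
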